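(* Let $s$ be a state, let $B$ be a formula of $\mathcal L_{class}$ with at most the free variable $x$, and let $t_1,t_2,u_1,u_2$ be closed terms of $\mathcal T_{class}$ (with $u_1,u_2$ of the type of $x$ and $t_j$ of type $|B[u_j/x]|$). If $t_1[s]=t_2[s]$ and $u_1[s]=u_2[s]$, then $t_1\Vvdash_s B[u_1/x]$ if and only if $t_2\Vvdash_s B[u_2/x]$.
   Context: Updates: an update is a finite set $U$ of triples of natural numbers forming the graph of a partial function $\mathbb N^2\to\mathbb N$. System $\mathcal T$ is Gödel's System T (types $\mathsf N,\mathsf{Bool}$, $\sigma\to\tau$, $\sigma\times\tau$; pairs $\langle\cdot,\cdot\rangle$, projections $\pi_0,\pi_1$; constants $0,\mathsf S,\mathsf{True},\mathsf{False},\mathsf{if}_\tau,\mathsf{rec}_\tau$ with the usual reductions) extended with a base type $\mathsf U$, a constant $\overline U:\mathsf U$ for each update $U$ ($\varnothing$ denotes $\overline{\emptyset}$), and constants $\min,\mathsf{get},\mathsf{mkupd},\cup$ computing respectively the least first component of a triple of an update (0 if empty), the value of an update at a pair (with a default), the singleton update $\{(a,n,m)\}$, and the consistent union ($U_1\cup U_2$ minus the triples of $U_2$ inconsistent with some triple of $U_1$). Terms of $\mathcal T$ are strongly normalizing with unique normal forms; for terms $t_1,t_2$ of $\mathcal T$, $t_1=t_2$ means they have the same normal form; closed normal terms of type $\mathsf N,\mathsf{Bool},\mathsf U$ are numerals, booleans, update constants. $\mathcal T_{class}$ is $\mathcal T$ plus countably many constants $\Phi_0,\Phi_1,\dots:\mathsf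 N\to\mathsf N$ without reduction rules. A state is a closed term $s:\mathsf N\to\mathsf N\to\mathsf N$ of $\mathcal T$; $s_i:=s(i)$; for $t\in\mathcal T_{class}$, $t[s]$ is obtained by replacing each $\Phi_i$ by $s_i$. Formulas of $\mathcal L_{class}$: atomic formulas are terms of $\mathcal T_{class}$ of type $\mathsf{Bool}$; formulas are built with $\land,\lor,\rightarrow,\mathbin{-}$ (co-implication, "$A$ and not $B$"), $\forall x^\tau,\exists x^\tau$. A formula is arithmetical if it contains no $\Phi_i$, its quantifiers range over $\mathsf N$ and its atoms are terms of $\mathcal T$. Involutive negation: an atom is positive if it is $\neg_{\mathsf{Bool}}\cdots\neg_{\mathsf{Bool}}Q$ with an even number of negations and $Q$ not a negation; $P^\bot=\neg_{\mathsf{Bool}}P$ and $(\neg_{\mathsf{Bool}}P)^\bot=P$ for positive $P$; $(A\land B)^\bot=A^\bot\lor B^\bot$, $(A\lor B)^\bot=A^\bot\land B^\bot$, $(A\to B)^\bot=A\mathbin{-}B$, $(A\mathbin{-}B)^\bot=A\to B$, $(\forall xA)^\bot=\exists xA^\bot$, $(\exists xA)^\bot=\forall xA^\bot$. $\langle\vec x\rangle$ is a term of $\mathcal T$ coding an injection $\mathbb N^k\to\mathbb N$, bijective on numerals. Each arithmetical $A(\vec x,y)$ has exactly one associated Skolem constant $\Phi_A$ (distinct formulas, distinct constants). Truth value: for arithmetical $F$ with free variables $\vec x$, a term $\llbracket F\rrbracket:\mathsf{Bool}$ of $\mathcal T_{class}$: $\llbracket P\rrbracket=P$; $\llbracket A\lor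 B\rrbracket=\llbracket A\rrbracket\lor_{\mathsf{Bool}}\llbracket B\rrbracket$; $\llbracket A\land B\rrbracket=\llbracket A\rrbracket\land_{\mathsf{Bool}}\llbracket B\rrbracket$; $\llbracket A\to B\rrbracket=\llbracket A\rrbracket\Rightarrow_{\mathsf{Bool}}\llbracket B\rrbracket$; $\llbracket A\mathbin{-}B\rrbracket=\llbracket A\rrbracket\land_{\mathsf{Bool}}\llbracket B^\bot\rrbracket$; $\llbracket \exists y A\rrbracket=\llbracket A\rrbracket[\Phi_A\langle\vec x\rangle/y]$; $\llbracket \forall y A\rrbracket=\llbracket A\rrbracket[\Phi_{A^\bot}\langle\vec x\rangle/y]$. $\llbracket F\rrbracket_s:=\llbracket F\rrbracket[s]$. $\Gamma$ is a fixed arbitrary finite set of arithmetical formulas. Types of realizers: $|P|=\mathsf U$ for atomic $P$, $|A\land B|=|A|\times|B|$, $|A\lor B|=\mathsf{Bool}\times(|A|\times|B|)$, $|A\to B|=|A|\to|B|$, $|A\mathbin{-}B|=|A|\times|B^\bot|$, $|\forall x^\tau A|=\tau\to|A|$, $|\exists x^\tau A|=\tau\times|A|$. Let $p_0=\pi_0$, $p_1=\pi_0\pi_1$, $p_2=\pi_1\pi_1$. For a state $s$, closed $t\in\mathcal T_{class}$ and closed $F$ with $t:|F|$, $t\Vvdash_s F$ is defined by: (atomic $Q$) if $t[s]=\overline U$ then every $(i,\langle\vec n\rangle,m)\in U$ has $\Phi_i=\Phi_A$ for some $A\in\Gamma$ with $\llbracket A\rrbracket_s(\vec n,s_i\langle\vec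 n\rangle)=\mathsf{False}$ and $\llbracket A\rrbracket_s(\vec n,m)=\mathsf{True}$, and $t[s]=\varnothing$ implies $Q[s]=\mathsf{True}$; $t\Vvdash_s A\land B$ iff $\pi_0t\Vvdash_sA$ and $\pi_1t\Vvdash_sB$; $t\Vvdash_sA\lor B$ iff either $p_0t[s]=\mathsf{True}$ and $p_1t\Vvdash_sA$, or $p_0t[s]=\mathsf{False}$ and $p_2t\Vvdash_sB$; $t\Vvdash_sA\to B$ iff for all $u$, $u\Vvdash_sA$ implies $tu\Vvdash_sB$; $t\Vvdash_sA\mathbin{-}B$ iff $\pi_0t\Vvdash_sA$ and $\pi_1t\Vvdash_sB^\bot$; $t\Vvdash_s\forall x^\tau A$ iff $tu\Vvdash_sA[u/x]$ for all closed $u:\tau$ of $\mathcal T$; $t\Vvdash_s\exists x^\tau A$ iff for some closed $u:\tau$ of $\mathcal T$, $\pi_0t[s]=u$ and $\pi_1t\Vvdash_sA[u/x]$. *)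

theory Defs
  imports Main
begin

typedef update = "{U :: (nat \<times> nat \<times> nat) set. finite U \<and>
    (\<forall>a n m m'. (a,n,m) \<in> U \<longrightarrow> (a,n,m') \<in> U \<longrightarrow> m = m')}"
  by (rule exI[of _ "{}"]) auto

definition empty_upd :: update where "empty_upd = Abs_update {}"

definition upd_min :: "update \<Rightarrow> nat" where
  "upd_min U = (if Rep_update U = {} then 0 else Min (fst ` Rep_update U))"

definition upd_get :: "update \<Rightarrow> nat \<Rightarrow> nat \<Rightarrow> nat \<Rightarrow> nat" where
  "upd_get U a n d = (if \<exists>m. (a,n,m) \<in> Rep_update U then (THE m. (a,n,m) \<in> Rep_update U) else d)"

definition upd_mk :: "nat \<Rightarrow> nat \<Rightarrow> nat \<Rightarrow> update" where
  "upd_mk a n m = Abs_update {(a,n,m)}"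

definition upd_cup :: "update \<Rightarrow> update \<Rightarrow> update" where
  "upd_cup U1 U2 = Abs_update (Rep_update U1 \<union>
     {(a,n,m). (a,n,m) \<in> Rep_update U2 \<and> (\<forall>m'. (a,n,m') \<in> Rep_update U1 \<longrightarrow> m' = m)})"

section \<open>Types and terms of System T_class\<close>

datatype ty = N | Bool | U | Arr ty ty | Prod ty ty

datatype const = Zero | Succ | TT | FF | If ty | Rec ty | Upd update
  | Min | Get | Mkupd | Cup | Phi nat

text \<open>Terms: de Bruijn indices (Var) for lambda-bound variables, named variables (FV) for
  variables bound by formula quantifiers.\<close>
datatype trm = Var nat | FV nat | Lam ty trm | App trm trm | Pair trm trm | Fst trm | Snd trm
  | Const const

fun ctype :: "const \<Rightarrow> ty" where
  "ctype Zero = N"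
| "ctype Succ = Arr N N"
| "ctype TT = Bool"
| "ctype FF = Bool"
| "ctype (If \<tau>) = Arr Bool (Arr \<tau> (Arr \<tau> \<tau>))"
| "ctype (Rec \<tau>) = Arr \<tau> (Arr (Arr N (Arr \<tau> \<tau>)) (Arr N \<tau>))"
| "ctype (Upd _) = U"
| "ctype Min = Arr U N"
| "ctype Get = Arr U (Arr N (Arr N (Arr N N)))"
| "ctype Mkupd = Arr N (Arr N (Arr N U))"
| "ctype Cup = Arr U (Arr U U)"
| "ctype (Phi _) = Arr N N"

inductive typing :: "(nat \<Rightarrow> ty) \<Rightarrow> ty list \<Rightarrow> trm \<Rightarrow> ty \<Rightarrow> bool" where
  "i < length \<Delta> \<Longrightarrow> typing E \<Delta> (Var i) (\<Delta> ! i)"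
| "typing E \<Delta> (FV x) (E x)"
| "typing E (\<sigma> # \<Delta>) b \<tau> \<Longrightarrow> typing E \<Delta> (Lam \<sigma> b) (Arr \<sigma> \<tau>)"
| "typing E \<Delta> f (Arr \<sigma> \<tau>) \<Longrightarrow> typing E \<Delta> a \<sigma> \<Longrightarrow> typing E \<Delta> (App f a) \<tau>"
| "typing E \<Delta> a \<sigma> \<Longrightarrow> typing E \<Delta> b \<tau> \<Longrightarrow> typing E \<Delta> (Pair a b) (Prod \<sigma> \<tau>)"
| "typing E \<Delta> p (Prod \<sigma> \<tau>) \<Longrightarrow> typing E \<Delta> (Fst p) \<sigma>"
| "typing E \<Delta> p (Prod \<sigma> \<tau>) \<Longrightarrow> typing E \<Delta> (Snd p) \<tau>"
| "typing E \<Delta> (Const c) (ctype c)"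

fun fvt :: "trm \<Rightarrow> nat set" where
  "fvt (Var _) = {}"
| "fvt (FV x) = {x}"
| "fvt (Lam _ b) = fvt b"
| "fvt (App a b) = fvt a \<union> fvt b"
| "fvt (Pair a b) = fvt a \<union> fvt b"
| "fvt (Fst a) = fvt a"
| "fvt (Snd a) = fvt a"
| "fvt (Const _) = {}"

fun hasPhi :: "trm \<Rightarrow> bool" where
  "hasPhi (Lam _ b) = hasPhi b"
| "hasPhi (App a b) = (hasPhi a \<or> hasPhi b)"
| "hasPhi (Pair a b) = (hasPhi a \<or> hasPhi b)"
| "hasPhi (Fst a) = hasPhi a"
| "hasPhi (Snd a) = hasPhi a"
| "hasPhi (Const (Phi _)) = True"
| "hasPhi _ = False"

definition ctyped :: "trm \<Rightarrow> ty \<Rightarrow> bool" where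
  "ctyped t \<tau> \<longleftrightarrow> fvt t = {} \<and> typing (\<lambda>_. N) [] t \<tau>"

text \<open>Closed term of T (no Skolem constants).\<close>
definition ctypedT :: "trm \<Rightarrow> ty \<Rightarrow> bool" where
  "ctypedT t \<tau> \<longleftrightarrow> ctyped t \<tau> \<and> \<not> hasPhi t"

fun num :: "nat \<Rightarrow> trm" where
  "num 0 = Const Zero"
| "num (Suc n) = App (Const Succ) (num n)"

section \<open>Reduction and normal forms\<close>

fun lift :: "nat \<Rightarrow> trm \<Rightarrow> trm" where
  "lift k (Var i) = (if i < k then Var i else Var (Suc i))"
| "lift k (Lam \<sigma> b) = Lam \<sigma> (lift (Suc k) b)"
| "lift k (App a b) = App (lift k a) (lift k b)"
| "lift k (Pair a b) = Pair (lift k a) (lift k b)"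
| "lift k (Fst a) = Fst (lift k a)"
| "lift k (Snd a) = Snd (lift k a)"
| "lift k t = t"

fun substb :: "trm \<Rightarrow> nat \<Rightarrow> trm \<Rightarrow> trm" where
  "substb (Var i) k u = (if i < k then Var i else if i = k then u else Var (i - 1))"
| "substb (Lam \<sigma> b) k u = Lam \<sigma> (substb b (Suc k) (lift 0 u))"
| "substb (App a b) k u = App (substb a k u) (substb b k u)"
| "substb (Pair a b) k u = Pair (substb a k u) (substb b k u)"
| "substb (Fst a) k u = Fst (substb a k u)"
| "substb (Snd a) k u = Snd (substb a k u)"
| "substb t k u = t"

abbreviation App3 :: "trm \<Rightarrow> trm \<Rightarrow> trm \<Rightarrow> trm \<Rightarrow> trm" where
  "App3 f a b c \<equiv> App (App (App f a) b) c"

inductive red :: "trm \<Rightarrow> trm \<Rightarrow> bool" where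
  beta: "red (App (Lam \<sigma> b) a) (substb b 0 a)"
| fst: "red (Fst (Pair a b)) a"
| snd: "red (Snd (Pair a b)) b"
| if_true: "red (App3 (Const (If \<tau>)) (Const TT) a b) a"
| if_false: "red (App3 (Const (If \<tau>)) (Const FF) a b) b"
| rec_zero: "red (App3 (Const (Rec \<tau>)) a f (Const Zero)) a"
| rec_succ: "red (App3 (Const (Rec \<tau>)) a f (App (Const Succ) n))
               (App (App f n) (App3 (Const (Rec \<tau>)) a f n))"
| min: "red (App (Const Min) (Const (Upd V))) (num (upd_min V))"
| get: "red (App (App3 (Const Get) (Const (Upd V)) (num a) (num n)) (num d))
             (num (upd_get V a n d))"
| mkupd: "red (App3 (Const Mkupd) (num a) (num n) (num m)) (Const (Upd (upd_mk a n m)))"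
| cup: "red (App (App (Const Cup) (Const (Upd V1))) (Const (Upd V2)))
            (Const (Upd (upd_cup V1 V2)))"
| lam: "red b b' \<Longrightarrow> red (Lam \<sigma> b) (Lam \<sigma> b')"
| appl: "red a a' \<Longrightarrow> red (App a b) (App a' b)"
| appr: "red b b' \<Longrightarrow> red (App a b) (App a b')"
| pairl: "red a a' \<Longrightarrow> red (Pair a b) (Pair a' b)"
| pairr: "red b b' \<Longrightarrow> red (Pair a b) (Pair a b')"
| fstc: "red a a' \<Longrightarrow> red (Fst a) (Fst a')"
| sndc: "red a a' \<Longrightarrow> red (Snd a) (Snd a')"

definition normal :: "trm \<Rightarrow> bool" where
  "normal t \<longleftrightarrow> \<not> (\<exists>t'. red t t')"

text \<open>t1 = t2 : the two terms have the same normal form.\<close>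
definition eqnf :: "trm \<Rightarrow> trm \<Rightarrow> bool" where
  "eqnf t1 t2 \<longleftrightarrow> (\<exists>n. red\<^sup>*\<^sup>* t1 n \<and> red\<^sup>*\<^sup>* t2 n \<and> normal n)"

text \<open>t[s]: replace each Phi i by s_i = s(i).\<close>
fun phis :: "trm \<Rightarrow> trm \<Rightarrow> trm" where
  "phis s (Const (Phi i)) = App s (num i)"
| "phis s (Lam \<sigma> b) = Lam \<sigma> (phis s b)"
| "phis s (App a b) = App (phis s a) (phis s b)"
| "phis s (Pair a b) = Pair (phis s a) (phis s b)"
| "phis s (Fst a) = Fst (phis s a)"
| "phis s (Snd a) = Snd (phis s a)"
| "phis s t = t"

definition is_state :: "trm \<Rightarrow> bool" where
  "is_state s \<longleftrightarrow> ctypedT s (Arr N (Arr N N))"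

text \<open>Substitution of a term w (without dangling de Bruijn indices) for the named variable x.\<close>
fun tsubst :: "nat \<Rightarrow> trm \<Rightarrow> trm \<Rightarrow> trm" where
  "tsubst x w (FV y) = (if y = x then w else FV y)"
| "tsubst x w (Lam \<sigma> b) = Lam \<sigma> (tsubst x w b)"
| "tsubst x w (App a b) = App (tsubst x w a) (tsubst x w b)"
| "tsubst x w (Pair a b) = Pair (tsubst x w a) (tsubst x w b)"
| "tsubst x w (Fst a) = Fst (tsubst x w a)"
| "tsubst x w (Snd a) = Snd (tsubst x w a)"
| "tsubst x w t = t"

section \<open>Formulas of L_class\<close>

datatype fm = Atom trm | And fm fm | Or fm fm | Imp fm fm | Coimp fm fm
  | All nat ty fm | Ex nat ty fm

fun fsize :: "fm \<Rightarrow> nat" where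
  "fsize (Atom _) = 1"
| "fsize (And A B) = Suc (fsize A + fsize B)"
| "fsize (Or A B) = Suc (fsize A + fsize B)"
| "fsize (Imp A B) = Suc (fsize A + fsize B)"
| "fsize (Coimp A B) = Suc (fsize A + fsize B)"
| "fsize (All _ _ A) = Suc (fsize A)"
| "fsize (Ex _ _ A) = Suc (fsize A)"

fun fvf :: "fm \<Rightarrow> nat set" where
  "fvf (Atom P) = fvt P"
| "fvf (And A B) = fvf A \<union> fvf B"
| "fvf (Or A B) = fvf A \<union> fvf B"
| "fvf (Imp A B) = fvf A \<union> fvf B"
| "fvf (Coimp A B) = fvf A \<union> fvf B"
| "fvf (All x _ A) = fvf A - {x}"
| "fvf (Ex x _ A) = fvf A - {x}"

fun wf_fm :: "(nat \<Rightarrow> ty) \<Rightarrow> fm \<Rightarrow> bool" where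
  "wf_fm E (Atom P) = typing E [] P Bool"
| "wf_fm E (And A B) = (wf_fm E A \<and> wf_fm E B)"
| "wf_fm E (Or A B) = (wf_fm E A \<and> wf_fm E B)"
| "wf_fm E (Imp A B) = (wf_fm E A \<and> wf_fm E B)"
| "wf_fm E (Coimp A B) = (wf_fm E A \<and> wf_fm E B)"
| "wf_fm E (All x \<tau> A) = wf_fm (E(x := \<tau>)) A"
| "wf_fm E (Ex x \<tau> A) = wf_fm (E(x := \<tau>)) A"

text \<open>F[u/x], u closed.\<close>
fun fsubst :: "nat \<Rightarrow> trm \<Rightarrow> fm \<Rightarrow> fm" where
  "fsubst x u (Atom P) = Atom (tsubst x u P)"
| "fsubst x u (And A B) = And (fsubst x u A) (fsubst x u B)"
| "fsubst x u (Or A B) = Or (fsubst x u A) (fsubst x u B)"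
| "fsubst x u (Imp A B) = Imp (fsubst x u A) (fsubst x u B)"
| "fsubst x u (Coimp A B) = Coimp (fsubst x u A) (fsubst x u B)"
| "fsubst x u (All y \<tau> A) = (if y = x then All y \<tau> A else All y \<tau> (fsubst x u A))"
| "fsubst x u (Ex y \<tau> A) = (if y = x then Ex y \<tau> A else Ex y \<tau> (fsubst x u A))"

fun atoms_noPhi :: "fm \<Rightarrow> bool" where
  "atoms_noPhi (Atom P) = (\<not> hasPhi P)"
| "atoms_noPhi (And A B) = (atoms_noPhi A \<and> atoms_noPhi B)"
| "atoms_noPhi (Or A B) = (atoms_noPhi A \<and> atoms_noPhi B)"
| "atoms_noPhi (Imp A B) = (atoms_noPhi A \<and> atoms_noPhi B)"
| "atoms_noPhi (Coimp A B) = (atoms_noPhi A \<and> atoms_noPhi B)"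
| "atoms_noPhi (All _ \<tau> A) = (\<tau> = N \<and> atoms_noPhi A)"
| "atoms_noPhi (Ex _ \<tau> A) = (\<tau> = N \<and> atoms_noPhi A)"

definition arithmetical :: "fm \<Rightarrow> bool" where
  "arithmetical F \<longleftrightarrow> atoms_noPhi F \<and> wf_fm (\<lambda>_. N) F"

abbreviation notB :: "trm \<Rightarrow> trm" where
  "notB P \<equiv> App3 (Const (If Bool)) P (Const FF) (Const TT)"
abbreviation andB :: "trm \<Rightarrow> trm \<Rightarrow> trm" where
  "andB P Q \<equiv> App3 (Const (If Bool)) P Q (Const FF)"
abbreviation orB :: "trm \<Rightarrow> trm \<Rightarrow> trm" where
  "orB P Q \<equiv> App3 (Const (If Bool)) P (Const TT) Q"
abbreviation impB :: "trm \<Rightarrow> trm \<Rightarrow> trm" where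
  "impB P Q \<equiv> App3 (Const (If Bool)) P Q (Const TT)"

fun negc :: "trm \<Rightarrow> nat" where
  "negc (App (App (App (Const (If Bool)) P) (Const FF)) (Const TT)) = Suc (negc P)"
| "negc _ = 0"

fun unneg :: "trm \<Rightarrow> trm" where
  "unneg (App (App (App (Const (If Bool)) P) (Const FF)) (Const TT)) = P"
| "unneg t = t"

definition adual :: "trm \<Rightarrow> trm" where
  "adual P = (if even (negc P) then notB P else unneg P)"

fun dual :: "fm \<Rightarrow> fm" where
  "dual (Atom P) = Atom (adual P)"
| "dual (And A B) = Or (dual A) (dual B)"
| "dual (Or A B) = And (dual A) (dual B)"
| "dual (Imp A B) = Coimp A B"
| "dual (Coimp A B) = Imp A B"
| "dual (All x \<tau> A) = Ex x \<tau> (dual A)"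
| "dual (Ex x \<tau> A) = All x \<tau> (dual A)"

lemma fsize_dual[simp]: "fsize (dual F) = fsize F"
  by (induction F) auto

lemma fsize_fsubst[simp]: "fsize (fsubst x u F) = fsize F"
  by (induction F) auto

text \<open>cd k is the closed T-term of type N -> ... -> N (k arguments) coding k-tuples;
  <x1,...,xk> is cd k applied to x1 ... xk.\<close>
fun nfun :: "nat \<Rightarrow> ty" where
  "nfun 0 = N"
| "nfun (Suc k) = Arr N (nfun k)"

definition cdapp :: "(nat \<Rightarrow> trm) \<Rightarrow> trm list \<Rightarrow> trm" where
  "cdapp cd ts = foldl App (cd (length ts)) ts"

definition good_code :: "(nat \<Rightarrow> trm) \<Rightarrow> bool" where
  "good_code cd \<longleftrightarrow> (\<forall>k. ctypedT (cd k) (nfun k)) \<and>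
     (\<exists>enc :: nat list \<Rightarrow> nat.
        (\<forall>ns. eqnf (cdapp cd (map num ns)) (num (enc ns))) \<and>
        (\<forall>k. inj_on enc {ns. length ns = k}) \<and>
        (\<forall>k\<ge>1. enc ` {ns. length ns = k} = UNIV))"

text \<open>Skolem constants: sk (A, y) is the index i of Phi_A for the arithmetical formula A(xs, y),
  where xs is the increasing list of the free variables of A other than y.\<close>
definition svars :: "fm \<Rightarrow> nat \<Rightarrow> nat list" where
  "svars A y = sorted_list_of_set (fvf A - {y})"

function tv :: "(fm \<times> nat \<Rightarrow> nat) \<Rightarrow> (nat \<Rightarrow> trm) \<Rightarrow> fm \<Rightarrow> trm" where
  "tv sk cd (Atom P) = P"
| "tv sk cd (And A B) = andB (tv sk cd A) (tv sk cd B)"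
| "tv sk cd (Or A B) = orB (tv sk cd A) (tv sk cd B)"
| "tv sk cd (Imp A B) = impB (tv sk cd A) (tv sk cd B)"
| "tv sk cd (Coimp A B) = andB (tv sk cd A) (tv sk cd (dual B))"
| "tv sk cd (Ex y \<tau> A) =
     tsubst y (App (Const (Phi (sk (A, y)))) (cdapp cd (map FV (svars A y)))) (tv sk cd A)"
| "tv sk cd (All y \<tau> A) =
     tsubst y (App (Const (Phi (sk (dual A, y)))) (cdapp cd (map FV (svars A y)))) (tv sk cd A)"
  by pat_completeness auto
termination by (relation "measure (\<lambda>(_, _, F). fsize F)") auto

text \<open>[[A]]_s(ns, w) for the formula A(xs, y): substitute numerals ns for xs and w for y.\<close>
definition tv_at :: "(fm \<times> nat \<Rightarrow> nat) \<Rightarrow> (nat \<Rightarrow> trm) \<Rightarrow> trm \<Rightarrow> fm \<Rightarrow> nat \<Rightarrow> nat list \<Rightarrow> trm \<Rightarrow> trm" where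
  "tv_at sk cd s A y ns w =
     foldr (\<lambda>(z, v) t. tsubst z v t) (zip (svars A y @ [y]) (map num ns @ [w])) (phis s (tv sk cd A))"

section \<open>Realizability\<close>

function rty :: "fm \<Rightarrow> ty" where
  "rty (Atom _) = U"
| "rty (And A B) = Prod (rty A) (rty B)"
| "rty (Or A B) = Prod Bool (Prod (rty A) (rty B))"
| "rty (Imp A B) = Arr (rty A) (rty B)"
| "rty (Coimp A B) = Prod (rty A) (rty (dual B))"
| "rty (All _ \<tau> A) = Arr \<tau> (rty A)"
| "rty (Ex _ \<tau> A) = Prod \<tau> (rty A)"
  by pat_completeness auto
termination by (relation "measure fsize") auto

text \<open>Condition on the update in the atomic clause; G is the set Gamma of arithmetical
  formulas A(xs, y), each given with its distinguished variable y.\<close>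
definition upd_ok :: "(fm \<times> nat) set \<Rightarrow> (fm \<times> nat \<Rightarrow> nat) \<Rightarrow> (nat \<Rightarrow> trm) \<Rightarrow> trm \<Rightarrow> update \<Rightarrow> bool" where
  "upd_ok G sk cd s V \<longleftrightarrow>
    (\<forall>(i, j, m) \<in> Rep_update V. \<exists>(A, y) \<in> G. i = sk (A, y) \<and>
       (\<exists>ns. length ns = length (svars A y) \<and> eqnf (cdapp cd (map num ns)) (num j) \<and>
          eqnf (tv_at sk cd s A y ns (App (App s (num i)) (cdapp cd (map num ns)))) (Const FF) \<and>
          eqnf (tv_at sk cd s A y ns (num m)) (Const TT)))"

function real :: "(fm \<times> nat) set \<Rightarrow> (fm \<times> nat \<Rightarrow> nat) \<Rightarrow> (nat \<Rightarrow> trm) \<Rightarrow> trm \<Rightarrow> trm \<Rightarrow> fm \<Rightarrow> bool" where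
  "real G sk cd s t (Atom Q) \<longleftrightarrow>
     (\<forall>V. eqnf (phis s t) (Const (Upd V)) \<longrightarrow> upd_ok G sk cd s V) \<and>
     (eqnf (phis s t) (Const (Upd empty_upd)) \<longrightarrow> eqnf (phis s Q) (Const TT))"
| "real G sk cd s t (And A B) \<longleftrightarrow> real G sk cd s (Fst t) A \<and> real G sk cd s (Snd t) B"
| "real G sk cd s t (Or A B) \<longleftrightarrow>
     (eqnf (phis s (Fst t)) (Const TT) \<and> real G sk cd s (Fst (Snd t)) A) \<or>
     (eqnf (phis s (Fst t)) (Const FF) \<and> real G sk cd s (Snd (Snd t)) B)"
| "real G sk cd s t (Imp A B) \<longleftrightarrow>
     (\<forall>u. ctyped u (rty A) \<longrightarrow> real G sk cd s u A \<longrightarrow> real G sk cd s (App t u) B)"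
| "real G sk cd s t (Coimp A B) \<longleftrightarrow> real G sk cd s (Fst t) A \<and> real G sk cd s (Snd t) (dual B)"
| "real G sk cd s t (All x \<tau> A) \<longleftrightarrow>
     (\<forall>u. ctypedT u \<tau> \<longrightarrow> real G sk cd s (App t u) (fsubst x u A))"
| "real G sk cd s t (Ex x \<tau> A) \<longleftrightarrow>
     (\<exists>u. ctypedT u \<tau> \<and> eqnf (phis s (Fst t)) u \<and> real G sk cd s (Snd t) (fsubst x u A))"
  by pat_completeness auto
termination by (relation "measure (\<lambda>(_, _, _, _, _, F). fsize F)") auto

end

theory Submission
  imports Defs "HOL-Library.Confluence"
begin

lemma lift_lift: "i \<le> k \<Longrightarrow> lift (Suc k) (lift i t) = lift i (lift k t)"
  by (induction t arbitrary: i k) auto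

lemma lift_substb_ge: "j \<le> i \<Longrightarrow> lift i (substb t j u) = substb (lift (Suc i) t) j (lift i u)"
  by (induction t arbitrary: i j u) (auto simp: lift_lift)

lemma lift_substb_le: "i \<le> j \<Longrightarrow> lift i (substb t j u) = substb (lift i t) (Suc j) (lift i u)"
  by (induction t arbitrary: i j u) (auto simp: lift_lift)

lemma substb_lift[simp]: "substb (lift k t) k u = t"
  by (induction t arbitrary: k u) auto

lemma substb_substb:
  "i \<le> j \<Longrightarrow> substb (substb t (Suc j) (lift i v)) i (substb u j v) = substb (substb t i u) j v"
proof (induction t arbitrary: i j u v)
  case (Lam \<sigma> t)
  have "lift 0 (lift i v) = lift (Suc i) (lift 0 v)" by (simp add: lift_lift)
  moreover have "lift 0 (substb u j v) = substb (lift 0 u) (Suc j) (lift 0 v)"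
    by (simp add: lift_substb_le)
  ultimately show ?case using Lam by simp
qed auto

section \<open>Head contraction and parallel reduction\<close>

fun unnum :: "trm \<Rightarrow> nat option" where
  "unnum (Const Zero) = Some 0"
| "unnum (App (Const Succ) t) = map_option Suc (unnum t)"
| "unnum _ = None"

lemma unnum_num[simp]: "unnum (num n) = Some n"
  by (induction n) auto

lemma unnum_SomeD: "unnum t = Some n \<Longrightarrow> t = num n"
  by (induction t arbitrary: n rule: unnum.induct) auto

lemma lift_num[simp]: "lift k (num n) = num n"
  by (induction n) auto

lemma substb_num[simp]: "substb (num n) k u = num n"
  by (induction n) auto

lemma unnum_lift: "unnum t = Some n \<Longrightarrow> lift k t = t"
  by (auto dest!: unnum_SomeD)

lemma unnum_substb: "unnum t = Some n \<Longrightarrow> substb t k u = t"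
  by (auto dest!: unnum_SomeD)

text \<open>Every contraction rule of red except the two projection rules rewrites an application
  App f a to the term contract f a.\<close>
fun contract :: "trm \<Rightarrow> trm \<Rightarrow> trm option" where
  "contract (Lam \<sigma> b) a = Some (substb b 0 a)"
| "contract (App (App (Const (If \<tau>)) c) x) y =
     (if c = Const TT then Some x else if c = Const FF then Some y else None)"
| "contract (App (App (Const (Rec \<tau>)) x) g) m =
     (if m = Const Zero then Some x
      else case m of App (Const Succ) n \<Rightarrow> Some (App (App g n) (App3 (Const (Rec \<tau>)) x g n))
                   | _ \<Rightarrow> None)"
| "contract (Const Min) a = (case a of Const (Upd V) \<Rightarrow> Some (num (upd_min V)) | _ \<Rightarrow> None)"
| "contract (App (App (App (Const Get) v) i) j) d =
     (case (v, unnum i, unnum j, unnum d) of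
        (Const (Upd V), Some a, Some n, Some dd) \<Rightarrow> Some (num (upd_get V a n dd))
      | _ \<Rightarrow> None)"
| "contract (App (App (Const Mkupd) i) j) m =
     (case (unnum i, unnum j, unnum m) of
        (Some a, Some n, Some mm) \<Rightarrow> Some (Const (Upd (upd_mk a n mm)))
      | _ \<Rightarrow> None)"
| "contract (App (Const Cup) v) w =
     (case (v, w) of
        (Const (Upd V1), Const (Upd V2)) \<Rightarrow> Some (Const (Upd (upd_cup V1 V2)))
      | _ \<Rightarrow> None)"
| "contract _ _ = None"

lemma contract_red: "contract f a = Some r \<Longrightarrow> red (App f a) r"
  by (induction f a rule: contract.induct)
     (auto split: if_splits option.splits trm.splits const.splits prod.splits
           dest!: unnum_SomeD intro: red.intros)

lemma contract_lift: "contract f a = Some r \<Longrightarrow> contract (lift k f) (lift k a) = Some (lift k r)"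
  by (induction f a rule: contract.induct)
     (auto split: if_splits option.splits trm.splits const.splits prod.splits
           simp: unnum_lift lift_substb_ge)

lemma contract_substb:
  "contract f a = Some r \<Longrightarrow> contract (substb f k u) (substb a k u) = Some (substb r k u)"
  by (induction f a rule: contract.induct)
     (auto split: if_splits option.splits trm.splits const.splits prod.splits
           simp: unnum_substb substb_substb[where i=0, simplified])

inductive par :: "trm \<Rightarrow> trm \<Rightarrow> bool" where
  par_Var: "par (Var i) (Var i)"
| par_FV: "par (FV x) (FV x)"
| par_Const: "par (Const c) (Const c)"
| par_Lam: "par b b' \<Longrightarrow> par (Lam \<sigma> b) (Lam \<sigma> b')"
| par_App: "par f f' \<Longrightarrow> par a a' \<Longrightarrow> par (App f a) (App f' a')"
| par_Pair: "par a a' \<Longrightarrow> par b b' \<Longrightarrow> par (Pair a b) (Pair a' b')"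
| par_Fst: "par a a' \<Longrightarrow> par (Fst a) (Fst a')"
| par_Snd: "par a a' \<Longrightarrow> par (Snd a) (Snd a')"
| par_contract: "par f f' \<Longrightarrow> par a a' \<Longrightarrow> contract f' a' = Some r \<Longrightarrow> par (App f a) r"
| par_Fst_Pair: "par t (Pair a b) \<Longrightarrow> par (Fst t) a"
| par_Snd_Pair: "par t (Pair a b) \<Longrightarrow> par (Snd t) b"

lemma par_refl[simp, intro]: "par t t"
  by (induction t) (auto intro: par.intros)

lemma red_imp_par: "red t t' \<Longrightarrow> par t t'"
proof (induction rule: red.induct)
  case (fst a b) show ?case by (rule par_Fst_Pair[OF par_refl])
next
  case (snd a b) show ?case by (rule par_Snd_Pair[OF par_refl])
qed (auto intro: par.intros par_contract[OF par_refl par_refl])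

lemma reds_App: "red\<^sup>*\<^sup>* f f' \<Longrightarrow> red\<^sup>*\<^sup>* a a' \<Longrightarrow> red\<^sup>*\<^sup>* (App f a) (App f' a')"
proof -
  assume f: "red\<^sup>*\<^sup>* f f'" and a: "red\<^sup>*\<^sup>* a a'"
  from f have "red\<^sup>*\<^sup>* (App f a) (App f' a)"
    by (induction rule: rtranclp_induct) (auto intro: rtranclp.rtrancl_into_rtrancl red.appl)
  also from a have "red\<^sup>*\<^sup>* (App f' a) (App f' a')"
    by (induction rule: rtranclp_induct) (auto intro: rtranclp.rtrancl_into_rtrancl red.appr)
  finally show ?thesis .
qed

lemma reds_Pair: "red\<^sup>*\<^sup>* a a' \<Longrightarrow> red\<^sup>*\<^sup>* b b' \<Longrightarrow> red\<^sup>*\<^sup>* (Pair a b) (Pair a' b')"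
proof -
  assume a: "red\<^sup>*\<^sup>* a a'" and b: "red\<^sup>*\<^sup>* b b'"
  from a have "red\<^sup>*\<^sup>* (Pair a b) (Pair a' b)"
    by (induction rule: rtranclp_induct) (auto intro: rtranclp.rtrancl_into_rtrancl red.pairl)
  also from b have "red\<^sup>*\<^sup>* (Pair a' b) (Pair a' b')"
    by (induction rule: rtranclp_induct) (auto intro: rtranclp.rtrancl_into_rtrancl red.pairr)
  finally show ?thesis .
qed

lemma reds_Lam: "red\<^sup>*\<^sup>* b b' \<Longrightarrow> red\<^sup>*\<^sup>* (Lam \<sigma> b) (Lam \<sigma> b')"
  by (induction rule: rtranclp_induct) (auto intro: rtranclp.rtrancl_into_rtrancl red.lam)

lemma reds_Fst: "red\<^sup>*\<^sup>* a a' \<Longrightarrow> red\<^sup>*\<^sup>* (Fst a) (Fst a')"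
  by (induction rule: rtranclp_induct) (auto intro: rtranclp.rtrancl_into_rtrancl red.fstc)

lemma reds_Snd: "red\<^sup>*\<^sup>* a a' \<Longrightarrow> red\<^sup>*\<^sup>* (Snd a) (Snd a')"
  by (induction rule: rtranclp_induct) (auto intro: rtranclp.rtrancl_into_rtrancl red.sndc)

lemma par_imp_reds: "par t t' \<Longrightarrow> red\<^sup>*\<^sup>* t t'"
proof (induction rule: par.induct)
  case (par_contract f f' a a' r)
  then show ?case using reds_App contract_red by (meson rtranclp.rtrancl_into_rtrancl)
next
  case (par_Fst_Pair t a b)
  then show ?case using reds_Fst red.fst by (meson rtranclp.rtrancl_into_rtrancl)
next
  case (par_Snd_Pair t a b)
  then show ?case using reds_Snd red.snd by (meson rtranclp.rtrancl_into_rtrancl)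
qed (auto intro: reds_App reds_Pair reds_Lam reds_Fst reds_Snd)

lemma rtranclp_red_eq_par: "red\<^sup>*\<^sup>* = par\<^sup>*\<^sup>*"
proof (intro ext iffI)
  show "red\<^sup>*\<^sup>* a b \<Longrightarrow> par\<^sup>*\<^sup>* a b" for a b
    by (induction rule: rtranclp_induct) (auto intro: rtranclp.rtrancl_into_rtrancl red_imp_par)
  show "par\<^sup>*\<^sup>* a b \<Longrightarrow> red\<^sup>*\<^sup>* a b" for a b
    by (induction rule: rtranclp_induct) (auto dest: par_imp_reds)
qed

lemma par_lift: "par t t' \<Longrightarrow> par (lift k t) (lift k t')"
proof (induction arbitrary: k rule: par.induct)
  case (par_contract f f' a a' r)
  then show ?case by (auto intro!: par.par_contract[where f'="lift k f'" and a'="lift k a'"] contract_lift)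
qed (auto intro: par.intros)

lemma par_substb: "par t t' \<Longrightarrow> par u u' \<Longrightarrow> par (substb t k u) (substb t' k u')"
proof (induction arbitrary: k u u' rule: par.induct)
  case (par_contract f f' a a' r)
  then show ?case
    by (auto intro!: par.par_contract[where f'="substb f' k u'" and a'="substb a' k u'"] contract_substb)
next
  case (par_Lam b b' \<sigma>)
  then show ?case by (simp add: par.par_Lam par_lift)
qed (auto intro: par.intros)

inductive_cases par_LamE: "par (Lam \<sigma> b) w"
inductive_cases par_ConstE: "par (Const c) w"
inductive_cases par_PairE: "par (Pair a b) w"
inductive_cases par_AppE: "par (App f a) w"

lemma par_Const_iff[simp]: "par (Const c) w \<longleftrightarrow> w = Const c"
  by (auto elim: par_ConstE)

lemma par_App_no_contract:
  "par (App f a) w \<Longrightarrow> (\<And>f' a'. par f f' \<Longrightarrow> contract f' a' = None)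
   \<Longrightarrow> \<exists>f' a'. w = App f' a' \<and> par f f' \<and> par a a'"
  by (erule par_AppE) fastforce+

lemma par_App_Const:
  "par (App (Const c) a) w \<Longrightarrow> c \<noteq> Min \<Longrightarrow> \<exists>a'. w = App (Const c) a' \<and> par a a'"
  by (drule par_App_no_contract) (cases c; auto)+

lemma par_num: "par (num n) w \<Longrightarrow> w = num n"
proof (induction n arbitrary: w)
  case (Suc n)
  then obtain a' where "w = App (Const Succ) a'" "par (num n) a'"
    using par_App_Const[of Succ "num n" w] by auto
  then show ?case using Suc.IH by simp
qed simp

lemma par_App2_Const:
  "par (App (App (Const c) a) b) w \<Longrightarrow> c \<noteq> Min \<Longrightarrow> c \<noteq> Cup \<Longrightarrow>
   \<exists>a' b'. w = App (App (Const c) a') b' \<and> par a a' \<and> par b b'"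
  by (drule par_App_no_contract, drule par_App_Const, assumption, cases c)
     (auto dest!: par_App_Const)

lemma par_App3_Get:
  assumes "par (App3 (Const Get) a b c) w"
  shows "\<exists>a' b' c'. w = App3 (Const Get) a' b' c' \<and> par a a' \<and> par b b' \<and> par c c'"
proof -
  have "\<exists>f' c'. w = App f' c' \<and> par (App (App (Const Get) a) b) f' \<and> par c c'"
    using assms by (rule par_App_no_contract) (auto dest!: par_App2_Const)
  then show ?thesis by (auto dest!: par_App2_Const)
qed

lemma contract_par:
  "contract f' a' = Some r \<Longrightarrow> par f' F \<Longrightarrow> par a' A \<Longrightarrow> \<exists>r'. contract F A = Some r' \<and> par r r'"
proof (induction f' a' rule: contract.induct)
  case (1 \<sigma> b a)
  then show ?case by (auto elim!: par_LamE intro: par_substb)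
next
  case (2 \<tau> c x y)
  then show ?case by (auto dest!: par_App2_Const split: if_splits)
next
  case (3 \<tau> x g m)
  then show ?case
    by (auto dest!: par_App2_Const par_App_Const split: if_splits trm.splits const.splits
             intro!: par_App)
next
  case (4 a)
  then show ?case by (auto split: trm.splits const.splits)
next
  case (5 v i j d)
  then show ?case
    by (auto dest!: par_App3_Get unnum_SomeD par_num split: trm.splits const.splits option.splits)
next
  case (6 i j m)
  then show ?case by (auto dest!: par_App2_Const unnum_SomeD par_num split: option.splits)
next
  case (7 v w)
  then show ?case by (auto dest!: par_App_Const split: trm.splits const.splits)
qed auto

fun cdev :: "trm \<Rightarrow> trm" where
  "cdev (App f a) = (case contract (cdev f) (cdev a) of Some r \<Rightarrow> r | None \<Rightarrow> App (cdev f) (cdev a))"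
| "cdev (Lam \<sigma> b) = Lam \<sigma> (cdev b)"
| "cdev (Pair a b) = Pair (cdev a) (cdev b)"
| "cdev (Fst t) = (case cdev t of Pair a b \<Rightarrow> a | t' \<Rightarrow> Fst t')"
| "cdev (Snd t) = (case cdev t of Pair a b \<Rightarrow> b | t' \<Rightarrow> Snd t')"
| "cdev t = t"

lemma par_cdev: "par t t' \<Longrightarrow> par t' (cdev t)"
proof (induction rule: par.induct)
  case (par_App f f' a a')
  then show ?case by (auto split: option.splits intro: par.intros)
next
  case (par_contract f f' a a' r)
  then obtain r' where "contract (cdev f) (cdev a) = Some r'" "par r r'"
    using contract_par by blast
  then show ?case by simp
next
  case (par_Fst a a')
  then show ?case by (auto split: trm.splits intro: par.intros)
next
  case (par_Snd a a')
  then show ?case by (auto split: trm.splits intro: par.intros)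
qed (auto intro: par.intros elim!: par_PairE)

lemma strong_confluentp_par: "strong_confluentp par"
  by (rule strong_confluentpI) (blast intro: par_cdev)

lemma confluentp_red: "confluentp red"
proof (rule confluentpI)
  show "\<exists>u. red\<^sup>*\<^sup>* y u \<and> red\<^sup>*\<^sup>* z u" if "red\<^sup>*\<^sup>* x y" "red\<^sup>*\<^sup>* x z" for x y z
    using that unfolding rtranclp_red_eq_par
    by (rule confluentpD[OF strong_confluentp_imp_confluentp[OF strong_confluentp_par]])
qed

section \<open>Normal forms and joinability\<close>

definition joinable :: "trm \<Rightarrow> trm \<Rightarrow> bool" where
  "joinable a b \<longleftrightarrow> (\<exists>c. red\<^sup>*\<^sup>* a c \<and> red\<^sup>*\<^sup>* b c)"

lemma normal_Const[simp]: "normal (Const c)"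
  unfolding normal_def by (auto elim: red.cases)

lemma normal_reds: "normal n \<Longrightarrow> red\<^sup>*\<^sup>* n m \<Longrightarrow> m = n"
  unfolding normal_def by (auto elim: converse_rtranclpE)

lemma eqnf_normal_iff: "normal b \<Longrightarrow> eqnf a b \<longleftrightarrow> red\<^sup>*\<^sup>* a b"
  unfolding eqnf_def using normal_reds by blast

lemma eqnf_imp_joinable: "eqnf a b \<Longrightarrow> joinable a b"
  unfolding eqnf_def joinable_def by blast

lemma joinable_refl[simp]: "joinable a a"
  unfolding joinable_def by blast

lemma joinable_sym: "joinable a b \<Longrightarrow> joinable b a"
  unfolding joinable_def by blast

lemma joinable_eqnf_left: "joinable a b \<Longrightarrow> eqnf a w \<Longrightarrow> eqnf b w"
proof -
  assume "joinable a b" "eqnf a w"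
  then obtain c n where c: "red\<^sup>*\<^sup>* a c" "red\<^sup>*\<^sup>* b c"
    and n: "red\<^sup>*\<^sup>* a n" "red\<^sup>*\<^sup>* w n" "normal n"
    unfolding joinable_def eqnf_def by blast
  obtain d where "red\<^sup>*\<^sup>* c d" "red\<^sup>*\<^sup>* n d"
    using confluentpD[OF confluentp_red c(1) n(1)] by blast
  with n(3) have "red\<^sup>*\<^sup>* c n" using normal_reds by blast
  with c(2) n show "eqnf b w" unfolding eqnf_def by (meson rtranclp_trans)
qed

lemma joinable_eqnf_iff: "joinable a b \<Longrightarrow> eqnf a w \<longleftrightarrow> eqnf b w"
  using joinable_eqnf_left joinable_sym by blast

lemma joinable_reds_normal_iff: "joinable a b \<Longrightarrow> normal w \<Longrightarrow> red\<^sup>*\<^sup>* a w \<longleftrightarrow> red\<^sup>*\<^sup>* b w"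
  using joinable_eqnf_iff eqnf_normal_iff by blast

lemma joinable_App: "joinable a b \<Longrightarrow> joinable c d \<Longrightarrow> joinable (App a c) (App b d)"
  unfolding joinable_def using reds_App by blast

lemma joinable_Pair: "joinable a b \<Longrightarrow> joinable c d \<Longrightarrow> joinable (Pair a c) (Pair b d)"
  unfolding joinable_def using reds_Pair by blast

lemma joinable_Lam: "joinable a b \<Longrightarrow> joinable (Lam \<sigma> a) (Lam \<sigma> b)"
  unfolding joinable_def using reds_Lam by blast

lemma joinable_Fst: "joinable a b \<Longrightarrow> joinable (Fst a) (Fst b)"
  unfolding joinable_def using reds_Fst by blast

lemma joinable_Snd: "joinable a b \<Longrightarrow> joinable (Snd a) (Snd b)"
  unfolding joinable_def using reds_Snd by blast

inductive_cases red_AppE: "red (App f a) w"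

lemma red_If_cases:
  assumes "red (App3 (Const (If \<tau>)) c a b) w" "normal a" "normal b"
  shows "(\<exists>c'. red c c' \<and> w = App3 (Const (If \<tau>)) c' a b) \<or>
         (c = Const TT \<and> w = a) \<or> (c = Const FF \<and> w = b)"
  using assms unfolding normal_def
  by (auto elim!: red_AppE elim: red.cases[of "Const _"] split: if_splits)

lemma reds_If_cases:
  assumes "red\<^sup>*\<^sup>* (App3 (Const (If \<tau>)) c a b) w" "normal a" "normal b"
  shows "(\<exists>c'. red\<^sup>*\<^sup>* c c' \<and> w = App3 (Const (If \<tau>)) c' a b) \<or>
         (red\<^sup>*\<^sup>* c (Const TT) \<and> w = a) \<or> (red\<^sup>*\<^sup>* c (Const FF) \<and> w = b)"
  using assms(1)
proof (induction rule: rtranclp_induct)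
  case (step y z)
  from step.IH show ?case
  proof (elim disjE exE conjE)
    fix c' assume "red\<^sup>*\<^sup>* c c'" "y = App3 (Const (If \<tau>)) c' a b"
    then show ?case using red_If_cases[of \<tau> c' a b z] step.hyps(2) assms(2,3)
      by (auto intro: rtranclp.rtrancl_into_rtrancl)
  qed (use step.hyps(2) assms(2,3) in \<open>auto simp: normal_def\<close>)
qed simp

lemma reds_notB_TT: "red\<^sup>*\<^sup>* (notB c) (Const TT) \<longleftrightarrow> red\<^sup>*\<^sup>* c (Const FF)"
proof
  assume "red\<^sup>*\<^sup>* c (Const FF)"
  then have "red\<^sup>*\<^sup>* (notB c) (notB (Const FF))" by (intro reds_App) auto
  then show "red\<^sup>*\<^sup>* (notB c) (Const TT)" by (meson red.if_false rtranclp.rtrancl_into_rtrancl)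
qed (auto dest: reds_If_cases)

lemma reds_notB_FF: "red\<^sup>*\<^sup>* (notB c) (Const FF) \<longleftrightarrow> red\<^sup>*\<^sup>* c (Const TT)"
proof
  assume "red\<^sup>*\<^sup>* c (Const TT)"
  then have "red\<^sup>*\<^sup>* (notB c) (notB (Const TT))" by (intro reds_App) auto
  then show "red\<^sup>*\<^sup>* (notB c) (Const FF)" by (meson red.if_true rtranclp.rtrancl_into_rtrancl)
qed (auto dest: reds_If_cases)

section \<open>Formulas with the same boolean behaviour\<close>

fun substall :: "(nat \<Rightarrow> trm) \<Rightarrow> trm \<Rightarrow> trm" where
  "substall \<rho> (FV x) = \<rho> x"
| "substall \<rho> (Lam \<tau> b) = Lam \<tau> (substall \<rho> b)"
| "substall \<rho> (App a b) = App (substall \<rho> a) (substall \<rho> b)"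
| "substall \<rho> (Pair a b) = Pair (substall \<rho> a) (substall \<rho> b)"
| "substall \<rho> (Fst a) = Fst (substall \<rho> a)"
| "substall \<rho> (Snd a) = Snd (substall \<rho> a)"
| "substall \<rho> t = t"

lemma substall_closed: "fvt t = {} \<Longrightarrow> substall \<rho> t = t"
  by (induction t) auto

lemma substall_tsubst: "fvt u = {} \<Longrightarrow> substall \<rho> (tsubst y u P) = substall (\<rho>(y := u)) P"
  by (induction P) (auto simp: substall_closed)

lemma substall_FV[simp]: "substall FV P = P"
  by (induction P) auto

lemma joinable_substall:
  "(\<And>v. joinable (phis s (\<rho>1 v)) (phis s (\<rho>2 v))) \<Longrightarrow>
   joinable (phis s (substall \<rho>1 P)) (phis s (substall \<rho>2 P))"
proof (induction P)
  case (Const c) then show ?case by (cases c) auto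
qed (auto intro: joinable_App joinable_Pair joinable_Lam joinable_Fst joinable_Snd)

lemma negc_notB: "negc P \<noteq> 0 \<Longrightarrow> \<exists>Q. P = notB Q"
  by (induction P rule: negc.induct) auto

lemma substall_adual:
  "substall \<rho> (adual P) = notB (substall \<rho> P) \<or> substall \<rho> P = notB (substall \<rho> (adual P))"
proof (cases "even (negc P)")
  case False
  then obtain Q where "P = notB Q" using negc_notB by (metis even_zero)
  with False show ?thesis by (simp add: adual_def)
qed (simp add: adual_def)

lemma reds_adual:
  "red\<^sup>*\<^sup>* (phis s (substall \<rho> (adual P))) (Const TT) \<longleftrightarrow> red\<^sup>*\<^sup>* (phis s (substall \<rho> P)) (Const FF)"
  "red\<^sup>*\<^sup>* (phis s (substall \<rho> (adual P))) (Const FF) \<longleftrightarrow> red\<^sup>*\<^sup>* (phis s (substall \<rho> P)) (Const TT)"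
  using substall_adual[of \<rho> P] by (auto simp: reds_notB_TT reds_notB_FF)

text \<open>Quantifying over all substitutions makes the relation stable under substitution; it cannot
  be replaced by joinability, which adual does not preserve (it may strip a negation on one side
  and add one on the other).\<close>
definition atom_equiv :: "trm \<Rightarrow> trm \<Rightarrow> trm \<Rightarrow> bool" where
  "atom_equiv s P Q \<longleftrightarrow> (\<forall>\<rho>. \<forall>c \<in> {TT, FF}.
     red\<^sup>*\<^sup>* (phis s (substall \<rho> P)) (Const c) \<longleftrightarrow> red\<^sup>*\<^sup>* (phis s (substall \<rho> Q)) (Const c))"

lemma atom_equiv_tsubst: "fvt u = {} \<Longrightarrow> atom_equiv s P Q \<Longrightarrow> atom_equiv s (tsubst y u P) (tsubst y u Q)"
  unfolding atom_equiv_def by (simp add: substall_tsubst)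

fun fm_equiv :: "trm \<Rightarrow> fm \<Rightarrow> fm \<Rightarrow> bool" where
  "fm_equiv s (Atom P) (Atom Q) = atom_equiv s P Q"
| "fm_equiv s (And A B) (And C D) = (fm_equiv s A C \<and> fm_equiv s B D)"
| "fm_equiv s (Or A B) (Or C D) = (fm_equiv s A C \<and> fm_equiv s B D)"
| "fm_equiv s (Imp A B) (Imp C D) = (fm_equiv s A C \<and> fm_equiv s B D)"
| "fm_equiv s (Coimp A B) (Coimp C D) = (fm_equiv s A C \<and> fm_equiv s B D)"
| "fm_equiv s (All x \<tau> A) (All y \<sigma> B) = (x = y \<and> \<tau> = \<sigma> \<and> fm_equiv s A B)"
| "fm_equiv s (Ex x \<tau> A) (Ex y \<sigma> B) = (x = y \<and> \<tau> = \<sigma> \<and> fm_equiv s A B)"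
| "fm_equiv s _ _ = False"

lemma fm_equiv_refl: "fm_equiv s F F"
  by (induction F) (auto simp: atom_equiv_def)

lemma fm_equiv_dual: "fm_equiv s F G \<Longrightarrow> fm_equiv s (dual F) (dual G)"
  by (induction F arbitrary: G; case_tac G) (auto simp: atom_equiv_def reds_adual)

lemma fm_equiv_fsubst: "fvt u = {} \<Longrightarrow> fm_equiv s F G \<Longrightarrow> fm_equiv s (fsubst y u F) (fsubst y u G)"
  by (induction F arbitrary: G; case_tac G) (auto simp: atom_equiv_tsubst)

lemma fm_equiv_rty: "fm_equiv s F G \<Longrightarrow> rty F = rty G \<and> rty (dual F) = rty (dual G)"
  by (induction F arbitrary: G; case_tac G) auto

lemma fm_equiv_fsubst_joinable:
  assumes "fvt u1 = {}" "fvt u2 = {}" "joinable (phis s u1) (phis s u2)"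
  shows "fm_equiv s (fsubst x u1 F) (fsubst x u2 F)"
proof (induction F)
  case (Atom P)
  have "joinable (phis s (substall (\<rho>(x := u1)) P)) (phis s (substall (\<rho>(x := u2)) P))" for \<rho>
    using assms(3) by (intro joinable_substall) auto
  then show ?case
    using assms(1,2) by (simp add: atom_equiv_def substall_tsubst joinable_reds_normal_iff)
qed (auto simp: fm_equiv_refl)

lemma ctypedT_closed: "ctypedT u \<tau> \<Longrightarrow> fvt u = {}"
  unfolding ctypedT_def ctyped_def by simp

context
  fixes G :: "(fm \<times> nat) set" and sk :: "fm \<times> nat \<Rightarrow> nat" and cd :: "nat \<Rightarrow> trm" and s :: trm
begin

definition real_equiv :: "fm \<Rightarrow> fm \<Rightarrow> bool" where
  "real_equiv F F' \<longleftrightarrow> (\<forall>t t'. joinable (phis s t) (phis s t') \<longrightarrow>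
     (real G sk cd s t F \<longleftrightarrow> real G sk cd s t' F'))"

lemma real_equivI:
  "(\<And>t t'. joinable (phis s t) (phis s t') \<Longrightarrow> real G sk cd s t F \<longleftrightarrow> real G sk cd s t' F') \<Longrightarrow>
   real_equiv F F'"
  unfolding real_equiv_def by blast

lemma real_equivD:
  "real_equiv F F' \<Longrightarrow> joinable (phis s t) (phis s t') \<Longrightarrow>
   real G sk cd s t F \<longleftrightarrow> real G sk cd s t' F'"
  unfolding real_equiv_def by blast

lemma real_equiv_Atom: "atom_equiv s P Q \<Longrightarrow> real_equiv (Atom P) (Atom Q)"
proof (rule real_equivI)
  assume "atom_equiv s P Q"
  then have "eqnf (phis s P) (Const TT) \<longleftrightarrow> eqnf (phis s Q) (Const TT)"
    unfolding atom_equiv_def by (simp add: eqnf_normal_iff) (metis substall_FV)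
  then show "real G sk cd s t (Atom P) \<longleftrightarrow> real G sk cd s t' (Atom Q)"
    if "joinable (phis s t) (phis s t')" for t t'
    using joinable_eqnf_iff[OF that] by simp
qed

lemma real_equiv_And: "real_equiv A C \<Longrightarrow> real_equiv B D \<Longrightarrow> real_equiv (And A B) (And C D)"
proof (rule real_equivI)
  fix t t' assume "real_equiv A C" "real_equiv B D" "joinable (phis s t) (phis s t')"
  then show "real G sk cd s t (And A B) \<longleftrightarrow> real G sk cd s t' (And C D)"
    using real_equivD[of A C "Fst t" "Fst t'"] real_equivD[of B D "Snd t" "Snd t'"]
    by (simp add: joinable_Fst joinable_Snd)
qed

lemma real_equiv_Or: "real_equiv A C \<Longrightarrow> real_equiv B D \<Longrightarrow> real_equiv (Or A B) (Or C D)"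
proof (rule real_equivI)
  fix t t' assume "real_equiv A C" "real_equiv B D" and j: "joinable (phis s t) (phis s t')"
  then show "real G sk cd s t (Or A B) \<longleftrightarrow> real G sk cd s t' (Or C D)"
    using real_equivD[of A C "Fst (Snd t)" "Fst (Snd t')"] real_equivD[of B D "Snd (Snd t)" "Snd (Snd t')"]
      joinable_eqnf_iff[OF joinable_Fst[OF j]]
    by (simp add: joinable_Fst joinable_Snd)
qed

lemma real_equiv_Imp:
  "real_equiv A C \<Longrightarrow> rty A = rty C \<Longrightarrow> real_equiv B D \<Longrightarrow> real_equiv (Imp A B) (Imp C D)"
proof (rule real_equivI)
  fix t t' assume "real_equiv A C" "rty A = rty C" "real_equiv B D" "joinable (phis s t) (phis s t')"
  then show "real G sk cd s t (Imp A B) \<longleftrightarrow> real G sk cd s t' (Imp C D)"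
    using real_equivD[of A C _ _, OF _ joinable_refl] real_equivD[of B D "App t u" "App t' u" for u]
    by (simp add: joinable_App)
qed

lemma real_equiv_Coimp:
  "real_equiv A C \<Longrightarrow> real_equiv (dual B) (dual D) \<Longrightarrow> real_equiv (Coimp A B) (Coimp C D)"
proof (rule real_equivI)
  fix t t' assume "real_equiv A C" "real_equiv (dual B) (dual D)" "joinable (phis s t) (phis s t')"
  then show "real G sk cd s t (Coimp A B) \<longleftrightarrow> real G sk cd s t' (Coimp C D)"
    using real_equivD[of A C "Fst t" "Fst t'"] real_equivD[of "dual B" "dual D" "Snd t" "Snd t'"]
    by (simp add: joinable_Fst joinable_Snd)
qed

lemma real_equiv_All:
  "(\<And>u. ctypedT u \<tau> \<Longrightarrow> real_equiv (fsubst x u A) (fsubst x u C)) \<Longrightarrow>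
   real_equiv (All x \<tau> A) (All x \<tau> C)"
proof (rule real_equivI)
  fix t t' assume "\<And>u. ctypedT u \<tau> \<Longrightarrow> real_equiv (fsubst x u A) (fsubst x u C)"
    and "joinable (phis s t) (phis s t')"
  then show "real G sk cd s t (All x \<tau> A) \<longleftrightarrow> real G sk cd s t' (All x \<tau> C)"
    using real_equivD[of "fsubst x u A" "fsubst x u C" "App t u" "App t' u" for u]
    by (simp add: joinable_App)
qed

lemma real_equiv_Ex:
  "(\<And>u. ctypedT u \<tau> \<Longrightarrow> real_equiv (fsubst x u A) (fsubst x u C)) \<Longrightarrow>
   real_equiv (Ex x \<tau> A) (Ex x \<tau> C)"
proof (rule real_equivI)
  fix t t' assume equiv: "\<And>u. ctypedT u \<tau> \<Longrightarrow> real_equiv (fsubst x u A) (fsubst x u C)"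
    and j: "joinable (phis s t) (phis s t')"
  have "real G sk cd s (Snd t) (fsubst x u A) \<longleftrightarrow> real G sk cd s (Snd t') (fsubst x u C)"
    if "ctypedT u \<tau>" for u
    by (rule real_equivD[OF equiv[OF that]]) (simp add: joinable_Snd j)
  then show "real G sk cd s t (Ex x \<tau> A) \<longleftrightarrow> real G sk cd s t' (Ex x \<tau> C)"
    using joinable_eqnf_iff[OF joinable_Fst[OF j]] by auto
qed

lemma fm_equiv_imp_real_equiv: "fm_equiv s F F' \<Longrightarrow> real_equiv F F'"
proof (induction F arbitrary: F' rule: measure_induct_rule[of fsize])
  case (less F)
  show ?case
  proof (cases F)
    case (Atom P)
    with less.prems show ?thesis by (cases F') (auto intro: real_equiv_Atom)
  next
    case (And A B)
    with less show ?thesis by (cases F') (auto intro: real_equiv_And)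
  next
    case (Or A B)
    with less show ?thesis by (cases F') (auto intro: real_equiv_Or)
  next
    case (Imp A B)
    with less show ?thesis by (cases F') (auto intro: real_equiv_Imp dest: fm_equiv_rty)
  next
    case (Coimp A B)
    with less.prems obtain C D where "F' = Coimp C D" "fm_equiv s A C" "fm_equiv s B D"
      by (cases F') auto
    with Coimp show ?thesis
      using less.IH[of A C] less.IH[of "dual B" "dual D"] fm_equiv_dual by (simp add: real_equiv_Coimp)
  next
    case (All x \<tau> A)
    with less.prems obtain C where "F' = All x \<tau> C" "fm_equiv s A C" by (cases F') auto
    moreover have "real_equiv (fsubst x u A) (fsubst x u C)" if "ctypedT u \<tau>" for u
      using less.IH[of "fsubst x u A" "fsubst x u C"] All \<open>fm_equiv s A C\<close>
        fm_equiv_fsubst[OF ctypedT_closed[OF that]]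
      by simp
    ultimately show ?thesis using All by (simp add: real_equiv_All)
  next
    case (Ex x \<tau> A)
    with less.prems obtain C where "F' = Ex x \<tau> C" "fm_equiv s A C" by (cases F') auto
    moreover have "real_equiv (fsubst x u A) (fsubst x u C)" if "ctypedT u \<tau>" for u
      using less.IH[of "fsubst x u A" "fsubst x u C"] Ex \<open>fm_equiv s A C\<close>
        fm_equiv_fsubst[OF ctypedT_closed[OF that]]
      by simp
    ultimately show ?thesis using Ex by (simp add: real_equiv_Ex)
  qed
qed

end

theorem mainTheorem2:
  fixes G :: "(fm \<times> nat) set" and sk :: "fm \<times> nat \<Rightarrow> nat" and cd :: "nat \<Rightarrow> trm"
    and s t1 t2 u1 u2 :: trm and B :: fm and x :: nat and E :: "nat \<Rightarrow> ty"
  assumes "finite G" and "\<forall>(A, y) \<in> G. arithmetical A"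
    and "inj_on sk {(A, y). arithmetical A}"
    and "good_code cd"
    and "is_state s"
    and "wf_fm E B" and "fvf B \<subseteq> {x}"
    and "ctyped u1 (E x)" and "ctyped u2 (E x)"
    and "ctyped t1 (rty (fsubst x u1 B))" and "ctyped t2 (rty (fsubst x u2 B))"
    and "eqnf (phis s t1) (phis s t2)" and "eqnf (phis s u1) (phis s u2)"
  shows "real G sk cd s t1 (fsubst x u1 B) \<longleftrightarrow> real G sk cd s t2 (fsubst x u2 B)"
proof -
  have "fvt u1 = {}" "fvt u2 = {}"
    using \<open>ctyped u1 (E x)\<close> \<open>ctyped u2 (E x)\<close> unfolding ctyped_def by auto
  then have "fm_equiv s (fsubst x u1 B) (fsubst x u2 B)"
    using fm_equiv_fsubst_joinable eqnf_imp_joinable[OF \<open>eqnf (phis s u1) (phis s u2)\<close>] by blast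
  then show ?thesis
    using fm_equiv_imp_real_equiv eqnf_imp_joinable[OF \<open>eqnf (phis s t1) (phis s t2)\<close>]
    unfolding real_equiv_def by blast
qed

end
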